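(* Let $(Y,d)$ be a metric space and let $k:Y\times Y\to[0,+\infty)$ be a positive, symmetric, bounded kernel such that the family $\{k(\cdot,y): y\in Y\}$ is uniformly equicontinuous on $(Y,d)$. Then $A(Y)=R(Y)\neq\emptyset$.
   Context: For a regular Borel probability measure $\mu$ on $Y$ (metric topology) the potential is $U^\mu(x)=\int_Y k(x,y)\,d\mu(y)$, and $A(\mu,Y):=\overline{\mathrm{conv}}\{U^\mu(x):x\in Y\}=[\inf_Y U^\mu,\sup_Y U^\mu]$. Let $\mathfrak{M}_1(Y)$ be the set of regular Borel probability measures on $Y$ and $\mathfrak{M}_1^{\#}(Y)$ those with finite support. The average set is $A(Y):=\bigcap_{\mu\in\mathfrak{M}_1(Y)}A(\mu,Y)$ and the rendezvous set is $R(Y):=\bigcap_{n\in\mathbb{N}}\bigcap_{w_1,\dots,w_n\in Y}A(\frac1n\sum_{j=1}^n\delta_{w_j},Y)$, which equals $\bigcap_{\mu\in\mathfrak{M}_1^{\#}(Y)}A(\mu,Y)$. *)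

theory Defs
  imports "HOL-Probability.Probability"
begin

definition regular_borel_prob :: "'a::metric_space measure \<Rightarrow> bool" where
  "regular_borel_prob M \<longleftrightarrow>
     sets M = sets borel \<and> prob_space M \<and>
     (\<forall>B\<in>sets borel.
        emeasure M B = (SUP K\<in>{K. compact K \<and> K \<subseteq> B}. emeasure M K) \<and>
        emeasure M B = (INF U\<in>{U. open U \<and> B \<subseteq> U}. emeasure M U))"

definition potential :: "('a \<Rightarrow> 'a \<Rightarrow> real) \<Rightarrow> 'a measure \<Rightarrow> 'a \<Rightarrow> real" where
  "potential k M x = (\<integral>y. k x y \<partial>M)"

definition A_mu :: "('a \<Rightarrow> 'a \<Rightarrow> real) \<Rightarrow> 'a measure \<Rightarrow> real set" where
  "A_mu k M = closure (convex hull (range (potential k M)))"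

definition average_set :: "('a::metric_space \<Rightarrow> 'a \<Rightarrow> real) \<Rightarrow> real set" where
  "average_set k = \<Inter> {A_mu k M | M. regular_borel_prob M}"

text \<open>Rendezvous set R(Y): intersection over all n \<ge> 1 and w_1..w_n of
  A((1/n) sum delta_{w_j}, Y); the list ws = [w_1,...,w_n] gives the empirical measure.\<close>
definition rendezvous_set :: "('a \<Rightarrow> 'a \<Rightarrow> real) \<Rightarrow> real set" where
  "rendezvous_set k = \<Inter> {A_mu k (measure_pmf (pmf_of_multiset (mset ws))) | ws. ws \<noteq> []}"

end

theory Submission
  imports Defs
begin

(* The potentials of a bounded kernel are bounded, so every A(mu,Y) is the interval
   [inf U^mu, sup U^mu].  For finitely supported mu and nu, symmetry of k gives
   int U^mu dnu = int U^nu dmu, hence inf U^mu <= sup U^nu: these intervals pairwise meet,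
   and the supremum of their left endpoints lies in R(Y).  Empirical measures are regular,
   so A(Y) is contained in R(Y).  Conversely, a regular probability measure is tight;
   quantizing a compact set of almost full mass to the centres of finitely many balls of
   the equicontinuity radius and rounding the resulting weights to multiples of 1/N
   approximates its potential uniformly by potentials of empirical measures, whence
   R(Y) is contained in A(Y). *)

lemma closure_convex_hull_real:
  fixes S :: "real set"
  assumes "S \<noteq> {}" "bdd_below S" "bdd_above S"
  shows "closure (convex hull S) = {Inf S..Sup S}"
proof
  show "closure (convex hull S) \<subseteq> {Inf S..Sup S}"
    using assms by (intro closure_minimal hull_minimal) (auto intro: cInf_lower cSup_upper)
  show "{Inf S..Sup S} \<subseteq> closure (convex hull S)"
  proof
    fix t assume t: "t \<in> {Inf S..Sup S}"
    have closure_S: "closure S \<subseteq> closure (convex hull S)"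
      by (intro closure_mono hull_subset)
    consider "t = Inf S" | "t = Sup S" | "Inf S < t" "t < Sup S"
      using t by fastforce
    then show "t \<in> closure (convex hull S)"
    proof cases
      case 1
      then show ?thesis using closure_contains_Inf[OF assms(1,2)] closure_S by auto
    next
      case 2
      then show ?thesis using closure_contains_Sup[OF assms(1,3)] closure_S by auto
    next
      case 3
      obtain a where "a \<in> S" "a < t" using cInf_lessD[OF assms(1) 3(1)] by blast
      moreover obtain c where "c \<in> S" "t < c" using less_cSupD[OF assms(1) 3(2)] by blast
      ultimately have "t \<in> closed_segment a c" by (simp add: closed_segment_eq_real_ivl)
      moreover have "closed_segment a c \<subseteq> convex hull S"
        using \<open>a \<in> S\<close> \<open>c \<in> S\<close> by (meson closed_segment_subset convex_convex_hull hull_inc)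
      ultimately show ?thesis using closure_subset by blast
    qed
  qed
qed

lemma A_mu_eq_interval:
  assumes "\<And>x. \<bar>potential k M x\<bar> \<le> C"
  shows "A_mu k M = {Inf (range (potential k M))..Sup (range (potential k M))}"
proof -
  have "bounded (range (potential k M))"
    using assms by (auto simp: bounded_iff)
  then show ?thesis
    unfolding A_mu_def by (intro closure_convex_hull_real bounded_imp_bdd_below bounded_imp_bdd_above) auto
qed

lemma abs_potential_le:
  fixes k :: "'a \<Rightarrow> 'a \<Rightarrow> real"
  assumes "prob_space M" "k x \<in> borel_measurable M" "\<And>y. \<bar>k x y\<bar> \<le> C"
  shows "\<bar>potential k M x\<bar> \<le> C"
proof -
  interpret prob_space M by fact
  have "integrable M (k x)"
    using assms by (intro integrable_const_bound[where B=C]) auto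
  then have "(\<integral>y. \<bar>k x y\<bar> \<partial>M) \<le> C"
    using assms(3) by (intro integral_le_const) auto
  then show ?thesis unfolding potential_def using integral_abs_bound[of M "k x"] by linarith
qed

lemma abs_potential_measure_pmf_le:
  assumes "\<And>x y. \<bar>k x y\<bar> \<le> C"
  shows "\<bar>potential k (measure_pmf p) x\<bar> \<le> C"
  using assms by (intro abs_potential_le) (auto intro: prob_space_measure_pmf)

lemma potential_measure_pmf_finite:
  assumes "finite (set_pmf p)"
  shows "potential k (measure_pmf p) x = (\<Sum>y\<in>set_pmf p. pmf p y * k x y)"
  unfolding potential_def using assms by (subst integral_measure_pmf_real) (auto simp: mult.commute)

lemma integral_potential_measure_pmf_swap:
  assumes "finite (set_pmf p)" "finite (set_pmf q)" "\<And>x y. k x y = k y x"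
  shows "(\<integral>x. potential k (measure_pmf p) x \<partial>measure_pmf q)
       = (\<integral>y. potential k (measure_pmf q) y \<partial>measure_pmf p)"
proof -
  have "(\<integral>x. potential k (measure_pmf p) x \<partial>measure_pmf q)
      = (\<Sum>x\<in>set_pmf q. \<Sum>y\<in>set_pmf p. pmf q x * pmf p y * k x y)"
    using assms by (simp add: integral_measure_pmf_real potential_measure_pmf_finite
        sum_distrib_left sum_distrib_right mult_ac)
  also have "\<dots> = (\<Sum>y\<in>set_pmf p. \<Sum>x\<in>set_pmf q. pmf q x * pmf p y * k x y)"
    by (rule sum.swap)
  also have "\<dots> = (\<integral>y. potential k (measure_pmf q) y \<partial>measure_pmf p)"
    using assms by (simp add: integral_measure_pmf_real potential_measure_pmf_finite
        sum_distrib_left sum_distrib_right mult_ac)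
  finally show ?thesis .
qed

lemma Inf_potential_le_Sup_potential:
  assumes "finite (set_pmf p)" "finite (set_pmf q)"
    and "\<And>x y. k x y = k y x" "\<And>x y. \<bar>k x y\<bar> \<le> C"
  shows "Inf (range (potential k (measure_pmf p))) \<le> Sup (range (potential k (measure_pmf q)))"
proof -
  have bound: "\<bar>potential k (measure_pmf r) x\<bar> \<le> C" for r x
    using assms(4) by (rule abs_potential_measure_pmf_le)
  have "bounded (range (potential k (measure_pmf r)))" for r
    using bound by (auto simp: bounded_iff)
  then have "bdd_below (range (potential k (measure_pmf p)))" "bdd_above (range (potential k (measure_pmf q)))"
    by (auto intro: bounded_imp_bdd_below bounded_imp_bdd_above)
  then have "Inf (range (potential k (measure_pmf p))) \<le> (\<integral>x. potential k (measure_pmf p) x \<partial>measure_pmf q)"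
    using assms(2) by (intro measure_pmf.integral_ge_const integrable_measure_pmf_finite AE_I2) (auto intro: cInf_lower)
  also have "\<dots> = (\<integral>y. potential k (measure_pmf q) y \<partial>measure_pmf p)"
    using assms(1-3) by (rule integral_potential_measure_pmf_swap)
  also have "\<dots> \<le> Sup (range (potential k (measure_pmf q)))"
    using \<open>bdd_above _\<close> assms(1)
    by (intro measure_pmf.integral_le_const integrable_measure_pmf_finite AE_I2) (auto intro: cSup_upper)
  finally show ?thesis .
qed

lemma mem_rendezvous_set_iff:
  "t \<in> rendezvous_set k \<longleftrightarrow> (\<forall>ws. ws \<noteq> [] \<longrightarrow> t \<in> A_mu k (measure_pmf (pmf_of_multiset (mset ws))))"
  unfolding rendezvous_set_def by blast

lemma rendezvous_set_nonempty:
  assumes "\<And>x y. k x y = k y x" "\<And>x y. \<bar>k x y\<bar> \<le> C"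
  shows "rendezvous_set k \<noteq> {}"
proof -
  let ?lo = "\<lambda>ws. Inf (range (potential k (measure_pmf (pmf_of_multiset (mset ws)))))"
  let ?hi = "\<lambda>ws. Sup (range (potential k (measure_pmf (pmf_of_multiset (mset ws)))))"
  have lo_le_hi: "?lo vs \<le> ?hi ws" if "vs \<noteq> []" "ws \<noteq> []" for vs ws
    using that by (intro Inf_potential_le_Sup_potential[OF _ _ assms]) auto
  define t where "t = (SUP vs\<in>{vs. vs \<noteq> []}. ?lo vs)"
  have "t \<in> A_mu k (measure_pmf (pmf_of_multiset (mset ws)))" if "ws \<noteq> []" for ws
  proof -
    have "bdd_above (?lo ` {vs. vs \<noteq> []})"
      using lo_le_hi[OF _ that] by (intro bdd_aboveI2[where M="?hi ws"]) auto
    then have "?lo ws \<le> t" "t \<le> ?hi ws"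
      unfolding t_def using that lo_le_hi by (auto intro!: cSUP_upper cSUP_least)
    then show ?thesis
      using that assms(2) by (subst A_mu_eq_interval) (auto intro: abs_potential_measure_pmf_le)
  qed
  then have "t \<in> rendezvous_set k" by (simp add: mem_rendezvous_set_iff)
  then show ?thesis by blast
qed

lemma regular_borel_prob_distr_measure_pmf:
  fixes p :: "'a::metric_space pmf"
  assumes fin: "finite (set_pmf p)"
  shows "regular_borel_prob (distr (measure_pmf p) borel id)"
  unfolding regular_borel_prob_def
proof (intro conjI ballI)
  let ?M = "distr (measure_pmf p) borel id"
  have em: "emeasure ?M B = emeasure p B" if "B \<in> sets borel" for B
    using that by (simp add: emeasure_distr)
  show "sets ?M = sets borel" by simp
  show "prob_space ?M" by (rule prob_space.prob_space_distr[OF prob_space_measure_pmf]) simp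
  fix B :: "'a set" assume B: "B \<in> sets borel"
  have cK: "compact (B \<inter> set_pmf p)" using fin by (simp add: finite_imp_compact)
  show "emeasure ?M B = (SUP K\<in>{K. compact K \<and> K \<subseteq> B}. emeasure ?M K)"
  proof (rule antisym)
    have "emeasure ?M B = emeasure ?M (B \<inter> set_pmf p)"
      using em[OF B] em[of "B \<inter> set_pmf p"] cK
      by (simp add: emeasure_Int_set_pmf compact_imp_closed borel_closed)
    also have "\<dots> \<le> (SUP K\<in>{K. compact K \<and> K \<subseteq> B}. emeasure ?M K)"
      by (rule SUP_upper) (use cK in auto)
    finally show "emeasure ?M B \<le> (SUP K\<in>{K. compact K \<and> K \<subseteq> B}. emeasure ?M K)" .
    show "(SUP K\<in>{K. compact K \<and> K \<subseteq> B}. emeasure ?M K) \<le> emeasure ?M B"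
      by (rule SUP_least) (auto intro!: emeasure_mono simp: B compact_imp_closed borel_closed)
  qed
  let ?U = "- (set_pmf p - B)"
  have oU: "open ?U" using fin by (intro open_Compl finite_imp_closed) auto
  show "emeasure ?M B = (INF U\<in>{U. open U \<and> B \<subseteq> U}. emeasure ?M U)"
  proof (rule antisym)
    show "emeasure ?M B \<le> (INF U\<in>{U. open U \<and> B \<subseteq> U}. emeasure ?M U)"
      by (rule INF_greatest) (auto intro!: emeasure_mono simp: borel_open)
    have "?U \<inter> set_pmf p = B \<inter> set_pmf p" by auto
    then have "emeasure ?M ?U = emeasure ?M B"
      using em[OF B] em[of ?U] oU by (metis borel_open emeasure_Int_set_pmf)
    then show "(INF U\<in>{U. open U \<and> B \<subseteq> U}. emeasure ?M U) \<le> emeasure ?M B"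
      by (intro INF_lower2[of ?U] order.refl) (use oU in auto)
  qed
qed

lemma potential_distr_measure_pmf:
  assumes "k x \<in> borel_measurable borel"
  shows "potential k (distr (measure_pmf p) borel id) x = potential k (measure_pmf p) x"
  unfolding potential_def using assms by (subst integral_distr) auto

lemma average_set_subset_rendezvous_set:
  fixes k :: "'a::metric_space \<Rightarrow> 'a \<Rightarrow> real"
  assumes "\<And>x. k x \<in> borel_measurable borel"
  shows "average_set k \<subseteq> rendezvous_set k"
proof -
  have "A_mu k (measure_pmf p) \<in> {A_mu k M | M. regular_borel_prob M}"
    if "finite (set_pmf p)" for p :: "'a pmf"
  proof -
    have "potential k (distr (measure_pmf p) borel id) = potential k (measure_pmf p)"
      using assms by (auto intro: potential_distr_measure_pmf)
    then have "A_mu k (measure_pmf p) = A_mu k (distr (measure_pmf p) borel id)"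
      by (simp add: A_mu_def)
    then show ?thesis using regular_borel_prob_distr_measure_pmf[OF that] by blast
  qed
  then show ?thesis
    unfolding average_set_def rendezvous_set_def by (intro Inter_anti_mono) auto
qed

definition uniformly_equicontinuous_kernel :: "('b \<Rightarrow> 'a::metric_space \<Rightarrow> real) \<Rightarrow> bool" where
  "uniformly_equicontinuous_kernel k \<longleftrightarrow>
     (\<forall>e>0. \<exists>\<delta>>0. \<forall>x y y'. dist y y' < \<delta> \<longrightarrow> \<bar>k x y - k x y'\<bar> < e)"

lemma uniformly_equicontinuous_kernel_if_symmetric:
  assumes "\<And>x y. k x y = k y x"
    and "\<forall>e>0. \<exists>\<delta>>0. \<forall>y x x'. dist x x' < \<delta> \<longrightarrow> \<bar>k x y - k x' y\<bar> < e"
  shows "uniformly_equicontinuous_kernel k"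
  unfolding uniformly_equicontinuous_kernel_def
proof (intro allI impI)
  fix e :: real assume "e > 0"
  then obtain \<delta> where \<delta>: "\<delta> > 0" "\<forall>y x x'. dist x x' < \<delta> \<longrightarrow> \<bar>k x y - k x' y\<bar> < e"
    using assms(2) by blast
  have "\<bar>k x y - k x y'\<bar> < e" if "dist y y' < \<delta>" for x y y'
  proof -
    have "\<bar>k y x - k y' x\<bar> < e" using \<delta>(2) \<open>dist y y' < \<delta>\<close> by blast
    then show ?thesis by (simp only: assms(1)[of x y] assms(1)[of x y'])
  qed
  then show "\<exists>\<delta>>0. \<forall>x y y'. dist y y' < \<delta> \<longrightarrow> \<bar>k x y - k x y'\<bar> < e"
    using \<delta>(1) by blast
qed

lemma borel_measurable_uniformly_equicontinuous_kernel:
  assumes "uniformly_equicontinuous_kernel k"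
  shows "k x \<in> borel_measurable borel"
proof -
  have "uniformly_continuous_on UNIV (k x)"
    unfolding uniformly_continuous_on_def
  proof (intro allI impI)
    fix e :: real assume "e > 0"
    then obtain \<delta> where "\<delta> > 0" "\<forall>x y y'. dist y y' < \<delta> \<longrightarrow> \<bar>k x y - k x y'\<bar> < e"
      using assms unfolding uniformly_equicontinuous_kernel_def by blast
    then show "\<exists>d>0. \<forall>y\<in>UNIV. \<forall>y'\<in>UNIV. dist y' y < d \<longrightarrow> dist (k x y') (k x y) < e"
      by (auto simp: dist_real_def)
  qed
  then show ?thesis by (intro borel_measurable_continuous_onI uniformly_continuous_imp_continuous)
qed

lemma regular_borel_prob_tight:
  assumes "regular_borel_prob \<mu>" "\<eta> > 0"
  obtains K where "compact K" "measure \<mu> (- K) \<le> \<eta>"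
proof -
  interpret prob_space \<mu> using assms(1) by (simp add: regular_borel_prob_def)
  have sets: "sets \<mu> = sets borel" using assms(1) by (simp add: regular_borel_prob_def)
  have space: "space \<mu> = UNIV" using sets_eq_imp_space_eq[OF sets] by simp
  have "ennreal (1 - \<eta>) < 1" using assms(2) by (simp add: ennreal_lessI)
  also have "1 = (SUP K\<in>{K. compact K \<and> K \<subseteq> UNIV}. emeasure \<mu> K)"
    using assms(1) emeasure_space_1 space by (auto simp: regular_borel_prob_def)
  finally obtain K where K: "compact K" "ennreal (1 - \<eta>) < measure \<mu> K"
    by (auto simp: less_SUP_iff emeasure_eq_measure)
  then have "1 - \<eta> < measure \<mu> K"
    using measure_nonneg[of \<mu> K] by (smt (verit) ennreal_less_iff)
  moreover have "K \<in> events" using K(1) sets by (simp add: compact_imp_closed borel_closed)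
  then have "measure \<mu> (- K) = 1 - measure \<mu> K"
    using prob_compl space by (simp add: Compl_eq_Diff_UNIV)
  ultimately show thesis using that K(1) by simp
qed

lemma borel_quantizer_exists:
  fixes T :: "'a::metric_space set"
  assumes "finite T"
  shows "\<exists>f. (\<forall>w. f -` {w} \<in> sets borel) \<and> range f \<subseteq> insert w0 T
    \<and> (\<forall>y. \<forall>t\<in>T. dist y t < d \<longrightarrow> dist y (f y) < d)"
  using assms
proof (induction rule: finite_induct)
  case empty
  show ?case by (intro exI[of _ "\<lambda>_. w0"]) (auto simp: vimage_def)
next
  case (insert t T)
  then obtain f where f: "\<forall>w. f -` {w} \<in> sets borel" "range f \<subseteq> insert w0 T"
    "\<forall>y. \<forall>t\<in>T. dist y t < d \<longrightarrow> dist y (f y) < d" by blast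
  define B where "B = {y. dist y t < d}"
  have "open B" unfolding B_def by (intro open_Collect_less continuous_intros)
  define g where "g y = (if y \<in> B then t else f y)" for y
  have "g -` {w} = (if w = t then B else {}) \<union> (f -` {w} - B)" for w
    by (auto simp: g_def)
  then have "\<forall>w. g -` {w} \<in> sets borel" using f(1) \<open>open B\<close> by (auto simp: borel_open)
  moreover have "range g \<subseteq> insert w0 (insert t T)" using f(2) by (auto simp: g_def)
  moreover have "\<forall>y. \<forall>s\<in>insert t T. dist y s < d \<longrightarrow> dist y (g y) < d"
    using f(3) by (auto simp: g_def B_def)
  ultimately show ?case by blast
qed

lemma integral_comp_finite_valued:
  fixes f :: "'a \<Rightarrow> 'b" and g :: "'b \<Rightarrow> real"
  assumes "finite_measure M" "finite F" "\<And>y. y \<in> space M \<Longrightarrow> f y \<in> F"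
    and "\<And>w. f -` {w} \<inter> space M \<in> sets M"
  shows "integrable M (\<lambda>y. g (f y))"
    and "(\<integral>y. g (f y) \<partial>M) = (\<Sum>w\<in>F. g w * measure M (f -` {w} \<inter> space M))"
proof -
  interpret finite_measure M by fact
  have sum_eq: "g (f y) = (\<Sum>w\<in>F. g w * indicator (f -` {w} \<inter> space M) y)" if "y \<in> space M" for y
  proof -
    have "(\<Sum>w\<in>F. g w * indicator (f -` {w} \<inter> space M) y) = (\<Sum>w\<in>F. if w = f y then g w else 0)"
      using that by (intro sum.cong) (auto simp: indicator_def)
    then show ?thesis using assms(2,3) that by (simp add: sum.delta')
  qed
  have "integrable M (\<lambda>y. \<Sum>w\<in>F. g w * indicator (f -` {w} \<inter> space M) y)"
    using assms(4) by (intro Bochner_Integration.integrable_sum integrable_mult_right integrable_real_indicator)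
      (auto simp: emeasure_finite less_top[symmetric])
  moreover have "integrable M (\<lambda>y. g (f y)) \<longleftrightarrow> integrable M (\<lambda>y. \<Sum>w\<in>F. g w * indicator (f -` {w} \<inter> space M) y)"
    by (rule Bochner_Integration.integrable_cong) (simp_all add: sum_eq)
  ultimately show "integrable M (\<lambda>y. g (f y))" by simp
  have "(\<integral>y. g (f y) \<partial>M) = (\<integral>y. (\<Sum>w\<in>F. g w * indicator (f -` {w} \<inter> space M) y) \<partial>M)"
    by (rule Bochner_Integration.integral_cong[OF refl sum_eq])
  also have "\<dots> = (\<Sum>w\<in>F. g w * measure M (f -` {w} \<inter> space M))"
    using assms(4) by (subst Bochner_Integration.integral_sum)
      (auto intro!: integrable_mult_right integrable_real_indicator simp: emeasure_finite less_top[symmetric])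
  finally show "(\<integral>y. g (f y) \<partial>M) = (\<Sum>w\<in>F. g w * measure M (f -` {w} \<inter> space M))" .
qed

lemma abs_integral_diff_le_split:
  fixes f g :: "'a \<Rightarrow> real"
  assumes "prob_space M" "integrable M f" "integrable M g" "K \<in> sets M" "0 \<le> \<eta>"
    and "\<And>y. y \<in> K \<Longrightarrow> \<bar>f y - g y\<bar> \<le> \<eta>" "\<And>y. y \<in> space M \<Longrightarrow> \<bar>f y - g y\<bar> \<le> D"
  shows "\<bar>(\<integral>y. f y \<partial>M) - (\<integral>y. g y \<partial>M)\<bar> \<le> \<eta> + D * measure M (space M - K)"
proof -
  interpret prob_space M by fact
  have ind_K: "integrable M (indicator (space M - K) :: 'a \<Rightarrow> real)"
    using assms(4) by (auto simp: integrable_indicator_iff Int_absorb2 emeasure_finite less_top[symmetric])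
  then have ind: "integrable M (\<lambda>y. \<eta> + D * indicator (space M - K) y)" by simp
  have "\<bar>(\<integral>y. f y \<partial>M) - (\<integral>y. g y \<partial>M)\<bar> = \<bar>\<integral>y. f y - g y \<partial>M\<bar>"
    using assms(2,3) by simp
  also have "\<dots> \<le> (\<integral>y. \<bar>f y - g y\<bar> \<partial>M)" by (rule integral_abs_bound)
  also have "\<dots> \<le> (\<integral>y. \<eta> + D * indicator (space M - K) y \<partial>M)"
  proof (intro Bochner_Integration.integral_mono)
    fix y assume "y \<in> space M"
    then show "\<bar>f y - g y\<bar> \<le> \<eta> + D * indicator (space M - K) y"
      using assms(5) assms(6,7)[of y] by (cases "y \<in> K") auto
  qed (use assms(2,3) ind in auto)
  also have "\<dots> = \<eta> + D * measure M (space M - K)"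
    using assms(4) ind_K prob_space by (simp add: emeasure_finite less_top[symmetric])
  finally show ?thesis .
qed

lemma potential_discretization:
  fixes k :: "'a::metric_space \<Rightarrow> 'a \<Rightarrow> real"
  assumes bound: "\<And>x y. \<bar>k x y\<bar> \<le> C"
    and equicont: "uniformly_equicontinuous_kernel k"
    and meas: "\<And>x. k x \<in> borel_measurable borel"
    and reg: "regular_borel_prob \<mu>" and "\<epsilon> > 0"
  obtains F p where "finite F" "F \<noteq> {}" "\<And>w. 0 \<le> p w" "(\<Sum>w\<in>F. p w) = 1"
    "\<And>x. \<bar>potential k \<mu> x - (\<Sum>w\<in>F. p w * k x w)\<bar> \<le> \<epsilon>"
proof -
  interpret prob_space \<mu> using reg by (simp add: regular_borel_prob_def)
  have sets: "sets \<mu> = sets borel" using reg by (simp add: regular_borel_prob_def)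
  have space: "space \<mu> = UNIV" using sets_eq_imp_space_eq[OF sets] by simp
  have "0 \<le> C" using bound[of undefined undefined] by linarith
  define \<eta> where "\<eta> = \<epsilon> / (2 * C + 1)"
  have "\<eta> > 0" using \<open>\<epsilon> > 0\<close> \<open>0 \<le> C\<close> by (simp add: \<eta>_def)
  obtain K where K: "compact K" "measure \<mu> (- K) \<le> \<eta>"
    using regular_borel_prob_tight[OF reg \<open>\<eta> > 0\<close>] .
  obtain \<delta> where \<delta>: "\<delta> > 0" "\<And>x y y'. dist y y' < \<delta> \<Longrightarrow> \<bar>k x y - k x y'\<bar> < \<eta>"
    using equicont \<open>\<eta> > 0\<close> unfolding uniformly_equicontinuous_kernel_def by blast
  obtain T where T: "finite T" "K \<subseteq> (\<Union>t\<in>T. ball t \<delta>)"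
    using compact_imp_seq_compact[OF K(1), THEN seq_compact_imp_totally_bounded] \<delta>(1) by blast
  \<comment> \<open>the extra point is the quantizer's value outside the balls and keeps F non-empty\<close>
  define F where "F = insert undefined T"
  obtain f where f: "\<And>w. f -` {w} \<in> sets borel" "range f \<subseteq> F"
    "\<And>y t. t \<in> T \<Longrightarrow> dist y t < \<delta> \<Longrightarrow> dist y (f y) < \<delta>"
    using borel_quantizer_exists[OF T(1), of undefined \<delta>] unfolding F_def by blast
  define p where "p w = measure \<mu> (f -` {w})" for w
  have integral_f: "integrable \<mu> (\<lambda>y. g (f y))" "(\<integral>y. g (f y) \<partial>\<mu>) = (\<Sum>w\<in>F. p w * g w)"
    for g :: "'a \<Rightarrow> real"
    using integral_comp_finite_valued[of \<mu> F f g] f(1,2) T(1) sets space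
    by (auto simp: finite_measure_axioms F_def p_def mult.commute)
  have "(\<Sum>w\<in>F. p w) = 1" using integral_f(2)[of "\<lambda>_. 1"] prob_space space by simp
  moreover have "\<bar>potential k \<mu> x - (\<Sum>w\<in>F. p w * k x w)\<bar> \<le> \<epsilon>" for x
  proof -
    have "k x \<in> borel_measurable \<mu>" using meas by (simp add: measurable_cong_sets[OF sets refl])
    then have "integrable \<mu> (k x)" using bound by (intro integrable_const_bound[where B=C]) auto
    have near: "\<bar>k x y - k x (f y)\<bar> \<le> \<eta>" if y: "y \<in> K" for y
    proof -
      obtain t where "t \<in> T" "dist y t < \<delta>" using T(2) y by (force simp: dist_commute)
      then show ?thesis using f(3) \<delta>(2) by (meson less_imp_le)
    qed
    have far: "\<bar>k x y - k x (f y)\<bar> \<le> 2 * C" for y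
      using bound[of x y] bound[of x "f y"] by linarith
    have "\<bar>potential k \<mu> x - (\<Sum>w\<in>F. p w * k x w)\<bar> = \<bar>(\<integral>y. k x y \<partial>\<mu>) - (\<integral>y. k x (f y) \<partial>\<mu>)\<bar>"
      by (simp add: potential_def integral_f)
    also have "\<dots> \<le> \<eta> + 2 * C * measure \<mu> (space \<mu> - K)"
      using K(1) sets \<open>\<eta> > 0\<close> \<open>integrable \<mu> (k x)\<close> integral_f(1) near far
      by (intro abs_integral_diff_le_split prob_space_axioms) (auto simp: compact_imp_closed borel_closed)
    also have "\<dots> \<le> \<eta> + 2 * C * \<eta>"
      using K(2) space \<open>0 \<le> C\<close> by (simp add: Compl_eq_Diff_UNIV mult_left_mono)
    also have "\<dots> = (2 * C + 1) * \<eta>" by (simp add: algebra_simps)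
    also have "\<dots> = \<epsilon>" using \<open>0 \<le> C\<close> by (simp add: \<eta>_def)
    finally show ?thesis .
  qed
  ultimately show thesis using that[of F p] T(1) by (simp add: F_def p_def)
qed

lemma nat_weights_rounding:
  fixes p :: "'a \<Rightarrow> real" and N :: nat
  assumes "finite F" "F \<noteq> {}" "\<And>w. w \<in> F \<Longrightarrow> 0 \<le> p w" "(\<Sum>w\<in>F. p w) = 1"
  obtains m :: "'a \<Rightarrow> nat" where "(\<Sum>w\<in>F. m w) = N"
    "(\<Sum>w\<in>F. \<bar>real (m w) - N * p w\<bar>) \<le> 2 * card F"
proof -
  obtain w0 where "w0 \<in> F" using assms(2) by blast
  define n where "n w = nat \<lfloor>N * p w\<rfloor>" for w
  have n: "real (n w) \<le> N * p w" "N * p w < real (n w) + 1" if "w \<in> F" for w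
  proof -
    have "real (n w) = of_int \<lfloor>N * p w\<rfloor>" using assms(3)[OF that] by (simp add: n_def)
    then show "real (n w) \<le> N * p w" "N * p w < real (n w) + 1" by linarith+
  qed
  have "real (\<Sum>w\<in>F. n w) \<le> (\<Sum>w\<in>F. N * p w)" using n(1) by (simp add: sum_mono)
  also have "\<dots> = N" by (simp add: sum_distrib_left[symmetric] assms(4))
  finally have "(\<Sum>w\<in>F. n w) \<le> N" by linarith
  define r where "r = N - (\<Sum>w\<in>F. n w)"
  have "real r = (\<Sum>w\<in>F. N * p w - n w)"
    using \<open>(\<Sum>w\<in>F. n w) \<le> N\<close>
    by (simp add: r_def of_nat_diff sum_subtractf sum_distrib_left[symmetric] assms(4))
  also have "\<dots> \<le> (\<Sum>w\<in>F. 1)" using n(2) by (intro sum_mono) fastforce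
  finally have "real r \<le> card F" by simp
  define m where "m w = n w + (if w = w0 then r else 0)" for w
  have "(\<Sum>w\<in>F. m w) = N"
    using assms(1) \<open>w0 \<in> F\<close> \<open>(\<Sum>w\<in>F. n w) \<le> N\<close> by (simp add: m_def sum.distrib r_def)
  moreover have "(\<Sum>w\<in>F. \<bar>real (m w) - N * p w\<bar>) \<le> 2 * card F"
  proof -
    have "(\<Sum>w\<in>F. \<bar>real (m w) - N * p w\<bar>)
        \<le> (\<Sum>w\<in>F. \<bar>real (n w) - N * p w\<bar> + (if w = w0 then real r else 0))"
      by (intro sum_mono) (simp add: m_def abs_if)
    also have "\<dots> = (\<Sum>w\<in>F. \<bar>real (n w) - N * p w\<bar>) + r"
      using assms(1) \<open>w0 \<in> F\<close> by (simp add: sum.distrib)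
    also have "\<dots> \<le> real (card F) + real (card F)"
      using n \<open>real r \<le> card F\<close> by (intro add_mono sum_bounded_above[of _ _ 1, simplified]) fastforce+
    finally show ?thesis by simp
  qed
  ultimately show thesis by (rule that)
qed

lemma pmf_of_multiset_approx:
  fixes p :: "'a \<Rightarrow> real" and N :: nat
  assumes "finite F" "F \<noteq> {}" "\<And>w. w \<in> F \<Longrightarrow> 0 \<le> p w" "(\<Sum>w\<in>F. p w) = 1" "N > 0"
  obtains M where "M \<noteq> {#}" "set_mset M \<subseteq> F"
    "(\<Sum>w\<in>F. \<bar>pmf (pmf_of_multiset M) w - p w\<bar>) \<le> 2 * card F / N"
proof -
  obtain m where m: "(\<Sum>w\<in>F. m w) = N" "(\<Sum>w\<in>F. \<bar>real (m w) - N * p w\<bar>) \<le> 2 * card F"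
    using nat_weights_rounding[OF assms(1-4)] .
  define M where "M = (\<Sum>w\<in>F. replicate_mset (m w) w)"
  have count: "count M w = (if w \<in> F then m w else 0)" for w
    using assms(1) by (simp add: M_def count_sum sum.If_cases)
  have "size M = N" using m(1) by (simp add: M_def)
  then have "M \<noteq> {#}" using assms(5) by auto
  moreover have "set_mset M \<subseteq> F" using count by (metis count_eq_zero_iff subsetI)
  moreover have "(\<Sum>w\<in>F. \<bar>pmf (pmf_of_multiset M) w - p w\<bar>) = (\<Sum>w\<in>F. \<bar>real (m w) - N * p w\<bar>) / N"
  proof -
    have "real (m w) / N - p w = (real (m w) - N * p w) / N" for w
      using assms(5) by (simp add: field_simps)
    then show ?thesis
      using \<open>M \<noteq> {#}\<close> \<open>size M = N\<close> by (simp add: count sum_divide_distrib abs_divide)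
  qed
  ultimately show thesis using that m(2) by (simp add: divide_right_mono)
qed

lemma potential_empirical_approx:
  fixes k :: "'a::metric_space \<Rightarrow> 'a \<Rightarrow> real"
  assumes bound: "\<And>x y. \<bar>k x y\<bar> \<le> C"
    and equicont: "uniformly_equicontinuous_kernel k"
    and meas: "\<And>x. k x \<in> borel_measurable borel"
    and reg: "regular_borel_prob \<mu>" and "\<epsilon> > 0"
  obtains M where "M \<noteq> {#}"
    "\<And>x. \<bar>potential k (measure_pmf (pmf_of_multiset M)) x - potential k \<mu> x\<bar> \<le> \<epsilon>"
proof -
  have "0 \<le> C" using bound[of undefined undefined] by linarith
  obtain F p where F: "finite F" "F \<noteq> {}" and p: "\<And>w. 0 \<le> p w" "(\<Sum>w\<in>F. p w) = 1"
    and discr: "\<And>x. \<bar>potential k \<mu> x - (\<Sum>w\<in>F. p w * k x w)\<bar> \<le> \<epsilon> / 2"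
    using potential_discretization[OF bound equicont meas reg half_gt_zero[OF \<open>\<epsilon> > 0\<close>]] by blast
  define N :: nat where "N = nat \<lceil>4 * card F * C / \<epsilon>\<rceil> + 1"
  have "N > 0" by (simp add: N_def)
  have "4 * card F * C / \<epsilon> \<le> N" unfolding N_def by linarith
  then have N_large: "2 * card F / N * C \<le> \<epsilon> / 2"
    using \<open>N > 0\<close> \<open>\<epsilon> > 0\<close> by (simp add: field_simps)
  obtain M where M: "M \<noteq> {#}" "set_mset M \<subseteq> F"
    "(\<Sum>w\<in>F. \<bar>pmf (pmf_of_multiset M) w - p w\<bar>) \<le> 2 * card F / N"
    using pmf_of_multiset_approx[OF F p \<open>N > 0\<close>] by blast
  have "\<bar>potential k (measure_pmf (pmf_of_multiset M)) x - potential k \<mu> x\<bar> \<le> \<epsilon>" for x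
  proof -
    have "potential k (measure_pmf (pmf_of_multiset M)) x = (\<Sum>w\<in>F. pmf (pmf_of_multiset M) w * k x w)"
      unfolding potential_def using M F by (subst integral_measure_pmf_real[where A=F]) (auto simp: mult.commute)
    then have "\<bar>potential k (measure_pmf (pmf_of_multiset M)) x - (\<Sum>w\<in>F. p w * k x w)\<bar>
        = \<bar>\<Sum>w\<in>F. (pmf (pmf_of_multiset M) w - p w) * k x w\<bar>"
      by (simp add: sum_subtractf left_diff_distrib)
    also have "\<dots> \<le> (\<Sum>w\<in>F. \<bar>pmf (pmf_of_multiset M) w - p w\<bar> * C)"
      using bound by (intro order_trans[OF sum_abs sum_mono]) (simp add: abs_mult mult_left_mono)
    also have "\<dots> \<le> 2 * card F / N * C"
      using mult_right_mono[OF M(3) \<open>0 \<le> C\<close>] by (simp add: sum_distrib_right)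
    finally show ?thesis using discr[of x] N_large by linarith
  qed
  then show thesis using that M(1) by blast
qed

lemma mem_Inf_Sup_range_of_uniform_approx:
  fixes f :: "'a \<Rightarrow> real"
  assumes "bdd_below (range f)" "bdd_above (range f)"
    and approx: "\<And>\<epsilon>. \<epsilon> > 0 \<Longrightarrow> \<exists>g. t \<in> {Inf (range g)..Sup (range g)} \<and> (\<forall>x. \<bar>g x - f x\<bar> \<le> \<epsilon>)"
  shows "t \<in> {Inf (range f)..Sup (range f)}"
proof -
  have "Inf (range f) \<le> t + \<epsilon> \<and> t \<le> Sup (range f) + \<epsilon>" if \<epsilon>: "\<epsilon> > 0" for \<epsilon>
  proof -
    obtain g where g: "Inf (range g) \<le> t" "t \<le> Sup (range g)" "\<And>x. \<bar>g x - f x\<bar> \<le> \<epsilon>"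
      using approx[OF \<epsilon>] by auto
    have "Inf (range f) - \<epsilon> \<le> Inf (range g)"
    proof (rule cINF_greatest)
      show "Inf (range f) - \<epsilon> \<le> g x" for x
        using cINF_lower[OF assms(1), of x] g(3)[of x] by (simp add: abs_le_iff)
    qed simp
    moreover have "Sup (range g) \<le> Sup (range f) + \<epsilon>"
    proof (rule cSUP_least)
      show "g x \<le> Sup (range f) + \<epsilon>" for x
        using cSUP_upper[OF _ assms(2), of x] g(3)[of x] by (simp add: abs_le_iff)
    qed simp
    ultimately show ?thesis using g(1,2) by linarith
  qed
  then show ?thesis by (auto intro: field_le_epsilon)
qed

lemma rendezvous_set_subset_average_set:
  fixes k :: "'a::metric_space \<Rightarrow> 'a \<Rightarrow> real"
  assumes bound: "\<And>x y. \<bar>k x y\<bar> \<le> C"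
    and equicont: "uniformly_equicontinuous_kernel k"
    and meas: "\<And>x. k x \<in> borel_measurable borel"
  shows "rendezvous_set k \<subseteq> average_set k"
proof
  fix t assume t: "t \<in> rendezvous_set k"
  have "t \<in> A_mu k \<mu>" if reg: "regular_borel_prob \<mu>" for \<mu>
  proof -
    have sets: "sets \<mu> = sets borel" and "prob_space \<mu>"
      using reg by (simp_all add: regular_borel_prob_def)
    have "\<bar>potential k \<mu> x\<bar> \<le> C" for x
      using \<open>prob_space \<mu>\<close> meas[of x] bound
      by (intro abs_potential_le) (simp_all add: measurable_cong_sets[OF sets refl])
    then have "bounded (range (potential k \<mu>))" by (auto simp: bounded_iff)
    show ?thesis
      unfolding A_mu_eq_interval[OF \<open>\<And>x. \<bar>potential k \<mu> x\<bar> \<le> C\<close>]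
    proof (rule mem_Inf_Sup_range_of_uniform_approx)
      fix \<epsilon> :: real assume "\<epsilon> > 0"
      then obtain M where M: "M \<noteq> {#}"
        "\<And>x. \<bar>potential k (measure_pmf (pmf_of_multiset M)) x - potential k \<mu> x\<bar> \<le> \<epsilon>"
        using potential_empirical_approx[OF bound equicont meas reg] by blast
      obtain ws where "mset ws = M" using ex_mset by blast
      with t M(1) have "t \<in> A_mu k (measure_pmf (pmf_of_multiset M))"
        by (auto simp: mem_rendezvous_set_iff)
      then have "t \<in> {Inf (range (potential k (measure_pmf (pmf_of_multiset M))))..
          Sup (range (potential k (measure_pmf (pmf_of_multiset M))))}"
        by (simp add: A_mu_eq_interval[OF abs_potential_measure_pmf_le[OF bound]])
      with M(2) show "\<exists>g. t \<in> {Inf (range g)..Sup (range g)} \<and> (\<forall>x. \<bar>g x - potential k \<mu> x\<bar> \<le> \<epsilon>)"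
        by blast
    qed (use \<open>bounded (range (potential k \<mu>))\<close> in \<open>auto intro: bounded_imp_bdd_below bounded_imp_bdd_above\<close>)
  qed
  then show "t \<in> average_set k" unfolding average_set_def by blast
qed

theorem theorem3p2:
  fixes k :: "'a::metric_space \<Rightarrow> 'a \<Rightarrow> real"
  assumes nonneg: "\<And>x y. 0 \<le> k x y"
    and symm: "\<And>x y. k x y = k y x"
    and bdd: "\<exists>C. \<forall>x y. k x y \<le> C"
    and equicont: "\<forall>e>0. \<exists>\<delta>>0. \<forall>y x x'. dist x x' < \<delta> \<longrightarrow> \<bar>k x y - k x' y\<bar> < e"
  shows "average_set k = rendezvous_set k \<and> average_set k \<noteq> {}"
proof -
  obtain C where "\<And>x y. k x y \<le> C" using bdd by blast
  with nonneg have bound: "\<And>x y. \<bar>k x y\<bar> \<le> C" by (simp add: abs_of_nonneg)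
  have equicont': "uniformly_equicontinuous_kernel k"
    using symm equicont by (rule uniformly_equicontinuous_kernel_if_symmetric)
  have meas: "\<And>x. k x \<in> borel_measurable borel"
    using equicont' by (rule borel_measurable_uniformly_equicontinuous_kernel)
  show ?thesis
    using average_set_subset_rendezvous_set[of k, OF meas] rendezvous_set_nonempty[of k, OF symm bound]
      rendezvous_set_subset_average_set[of k, OF bound equicont' meas]
    by blast
qed

end
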